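(* For every unweighted instance of the atomic two-stage facility location game and every facility placement profile $\mathbf{s}$, there exists a rounded client profile $\sigma(\mathbf{s})$.
   Context: Setting: a finite directed graph $H=(V,E)$ whose vertices are clients, all of weight $w(v)=1$ (unweighted); a finite set $F$ of facility agents; a facility placement profile $\mathbf{s}=(s_f)_{f\in F}$ with $s_f\in V$ (any feasibility restrictions on locations are irrelevant here). Let $N(v)=\{v\}\cup\{u:(v,u)\in E\}$, $N_{\mathbf{s}}(v)=\{f\in F:s_f\in N(v)\}$, $A_{\mathbf{s}}(f)=\{v: f\in N_{\mathbf{s}}(v)\}$, $A_{\mathbf{s}}(T)=\bigcup_{f\in T}A_{\mathbf{s}}(f)$, $w(X)=|X|$. A client profile $\sigma(\mathbf{s})$ assigns to each client $v$ numbers $\sigma(\mathbf{s})_{v,f}\in[0,1]$ with $\sigma(\mathbf{s})_{v,f}=0$ for $f\notin N_{\mathbf{s}}(v)$ and $\sum_f\sigma(\mathbf{s})_{v,f}=1$ whenever $N_{\mathbf{s}}(v)\neq\varnothing$. Load $\ell_f=\sum_v\sigma(\mathbf{s})_{v,f}w(v)$. Minimum neighborhood set: for nonempty $F^*\subseteq F$, $V^*\subseteq V$, $\mathrm{MNS}_{\mathbf{s}}(F^*,V^* )$ is the largest-cardinality subset among the nonempty $T\subseteq F^*$ minimizing $w(A_{\mathbf{s}}(T)\cap V^* )/|T|$. Class set: inductively, while facilities remain, $F_i=\mathrm{MNS}_{\mathbf{s}}(F\setminus\bigcup_{j<i}F_j, V\setminus\bigcup_{j<i}V_j)$, $V_i=A_{\mathbf{s}}(F_i)\setminus\bigcup_{j<i}V_j$,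 $C_i=(F_i,V_i)$, $\ell(C_i)=w(V_i)/|F_i|$. A client profile $\sigma(\mathbf{s})$ is rounded if for every class $C_i$ and every $f\in F_i$ we have $\ell_f\in\{\lfloor\ell(C_i)\rfloor,\lceil\ell(C_i)\rceil\}$, and for every class $C_i$ and every client $v\in V_i$ there is exactly one $g\in F_i$ with $\sigma(\mathbf{s})_{v,g}=1$. *)

theory Defs
  imports Main "HOL-Library.Extended_Real" Complex_Main
begin

text \<open>Clients are the vertices V of a directed graph with edge set E;
  facilities F with placement s. All client weights are 1.\<close>

definition nbh :: "('v \<times> 'v) set \<Rightarrow> 'v \<Rightarrow> 'v set" where
  "nbh E v = {v} \<union> {u. (v, u) \<in> E}"

definition Nfac :: "('v \<times> 'v) set \<Rightarrow> 'f set \<Rightarrow> ('f \<Rightarrow> 'v) \<Rightarrow> 'v \<Rightarrow> 'f set" where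
  "Nfac E F s v = {f \<in> F. s f \<in> nbh E v}"

definition Acl :: "'v set \<Rightarrow> ('v \<times> 'v) set \<Rightarrow> 'f set \<Rightarrow> ('f \<Rightarrow> 'v) \<Rightarrow> 'f set \<Rightarrow> 'v set" where
  "Acl V E F s T = {v \<in> V. \<exists>f \<in> T. f \<in> Nfac E F s v}"

definition ratio :: "'v set \<Rightarrow> ('v \<times> 'v) set \<Rightarrow> 'f set \<Rightarrow> ('f \<Rightarrow> 'v) \<Rightarrow> 'v set \<Rightarrow> 'f set \<Rightarrow> real" where
  "ratio V E F s Vs T = real (card (Acl V E F s T \<inter> Vs)) / real (card T)"

definition minimizers :: "'v set \<Rightarrow> ('v \<times> 'v) set \<Rightarrow> 'f set \<Rightarrow> ('f \<Rightarrow> 'v) \<Rightarrow> 'f set \<Rightarrow> 'v set \<Rightarrow> 'f set set" where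
  "minimizers V E F s Fs Vs = {T. T \<noteq> {} \<and> T \<subseteq> Fs \<and>
      (\<forall>T'. T' \<noteq> {} \<and> T' \<subseteq> Fs \<longrightarrow> ratio V E F s Vs T \<le> ratio V E F s Vs T')}"

definition MNS :: "'v set \<Rightarrow> ('v \<times> 'v) set \<Rightarrow> 'f set \<Rightarrow> ('f \<Rightarrow> 'v) \<Rightarrow> 'f set \<Rightarrow> 'v set \<Rightarrow> 'f set" where
  "MNS V E F s Fs Vs = (SOME T. T \<in> minimizers V E F s Fs Vs \<and>
      (\<forall>T' \<in> minimizers V E F s Fs Vs. card T' \<le> card T))"

fun remaining :: "'v set \<Rightarrow> ('v \<times> 'v) set \<Rightarrow> 'f set \<Rightarrow> ('f \<Rightarrow> 'v) \<Rightarrow> nat \<Rightarrow> 'f set \<times> 'v set" where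
  "remaining V E F s 0 = (F, V)"
| "remaining V E F s (Suc i) =
     (let (Fr, Vr) = remaining V E F s i;
          Fi = (if Fr = {} then {} else MNS V E F s Fr Vr);
          Vi = Acl V E F s Fi \<inter> Vr
      in (Fr - Fi, Vr - Vi))"

text \<open>Class C_i = (classF i, classV i); it is a genuine class iff classF i is nonempty.\<close>
definition classF :: "'v set \<Rightarrow> ('v \<times> 'v) set \<Rightarrow> 'f set \<Rightarrow> ('f \<Rightarrow> 'v) \<Rightarrow> nat \<Rightarrow> 'f set" where
  "classF V E F s i = (let (Fr, Vr) = remaining V E F s i in
      if Fr = {} then {} else MNS V E F s Fr Vr)"

definition classV :: "'v set \<Rightarrow> ('v \<times> 'v) set \<Rightarrow> 'f set \<Rightarrow> ('f \<Rightarrow> 'v) \<Rightarrow> nat \<Rightarrow> 'v set" where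
  "classV V E F s i = Acl V E F s (classF V E F s i) \<inter> snd (remaining V E F s i)"

definition class_load :: "'v set \<Rightarrow> ('v \<times> 'v) set \<Rightarrow> 'f set \<Rightarrow> ('f \<Rightarrow> 'v) \<Rightarrow> nat \<Rightarrow> real" where
  "class_load V E F s i = real (card (classV V E F s i)) / real (card (classF V E F s i))"

text \<open>Client profile: sigma v f is the fraction of client v assigned to facility f.\<close>
definition client_profile :: "'v set \<Rightarrow> ('v \<times> 'v) set \<Rightarrow> 'f set \<Rightarrow> ('f \<Rightarrow> 'v) \<Rightarrow> ('v \<Rightarrow> 'f \<Rightarrow> real) \<Rightarrow> bool" where
  "client_profile V E F s \<sigma> \<longleftrightarrow>
     (\<forall>v \<in> V. \<forall>f \<in> F. 0 \<le> \<sigma> v f \<and> \<sigma> v f \<le> 1 \<and> (f \<notin> Nfac E F s v \<longrightarrow> \<sigma> v f = 0)) \<and>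
     (\<forall>v \<in> V. Nfac E F s v \<noteq> {} \<longrightarrow> (\<Sum>f \<in> F. \<sigma> v f) = 1)"

definition load :: "'v set \<Rightarrow> ('v \<Rightarrow> 'f \<Rightarrow> real) \<Rightarrow> 'f \<Rightarrow> real" where
  "load V \<sigma> f = (\<Sum>v \<in> V. \<sigma> v f)"

definition rounded :: "'v set \<Rightarrow> ('v \<times> 'v) set \<Rightarrow> 'f set \<Rightarrow> ('f \<Rightarrow> 'v) \<Rightarrow> ('v \<Rightarrow> 'f \<Rightarrow> real) \<Rightarrow> bool" where
  "rounded V E F s \<sigma> \<longleftrightarrow> client_profile V E F s \<sigma> \<and>
     (\<forall>i. classF V E F s i \<noteq> {} \<longrightarrow>
        (\<forall>f \<in> classF V E F s i.
            load V \<sigma> f = of_int \<lfloor>class_load V E F s i\<rfloor> \<or>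
            load V \<sigma> f = of_int \<lceil>class_load V E F s i\<rceil>) \<and>
        (\<forall>v \<in> classV V E F s i. \<exists>!g. g \<in> classF V E F s i \<and> \<sigma> v g = 1))"

end

theory Submission
  imports Defs
begin

(* Each class C_i = (F_i, V_i) is handled separately.  Since F_i minimises the neighbourhood
   ratio among the remaining facilities, every S within F_i satisfies the proportional Hall
   condition |V_i| |S| <= |N(S) within V_i| |F_i|.  Assign the clients of V_i to adjacent
   facilities of F_i so that the sum of squared loads is minimal.  Moving one client at a time
   along a path g -> ... -> h of the exchange graph (an edge g -> h means that a client at g is
   adjacent to h) changes this potential by 2 (l h - l g + 1), so l g <= l h + 1 whenever h is
   reachable from g.  Clients adjacent to the set R of facilities that reach f are all assigned
   inside R, hence by Hall  |V_i| / |F_i| |R| <= sum over R of l < (l f + 1) |R|;  dually for the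
   facilities reachable from f.  So every load is within 1 of |V_i| / |F_i|, i.e. equal to its
   floor or ceiling. *)

lemma relpow_first_step_avoiding_source:
  assumes "(g, h) \<in> r ^^ n" "g \<noteq> h"
  shows "\<exists>g' m. m < n \<and> (g, g') \<in> r \<and> (g', h) \<in> {(a, b) \<in> r. a \<noteq> g} ^^ m"
  using assms
proof (induction n arbitrary: h)
  case (Suc n)
  from Suc.prems(1) obtain y where y: "(g, y) \<in> r ^^ n" "(y, h) \<in> r"
    by (rule relpow_Suc_E)
  show ?case
  proof (cases "y = g")
    case True
    with y(2) show ?thesis by (intro exI[of _ h] exI[of _ 0]) auto
  next
    case False
    with Suc.IH y(1) obtain g' m where "m < n" "(g, g') \<in> r"
      and "(g', y) \<in> {(a, b) \<in> r. a \<noteq> g} ^^ m"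
      by blast
    moreover have "(y, h) \<in> {(a, b) \<in> r. a \<noteq> g}"
      using y(2) False by simp
    ultimately show ?thesis by (intro exI[of _ g'] exI[of _ "Suc m"]) auto
  qed
qed simp

lemma sum_less_card_mult_succ:
  fixes h :: "'a \<Rightarrow> real"
  assumes "finite R" "x \<in> R" "\<And>g. g \<in> R \<Longrightarrow> h g \<le> h x + 1"
  shows "sum h R < (h x + 1) * card R"
proof -
  have "0 < card R"
    using assms(1,2) card_gt_0_iff by blast
  then have card_remove: "real (card (R - {x})) = real (card R) - 1"
    using assms(2) by (simp add: of_nat_diff)
  have "sum h R = h x + sum h (R - {x})"
    using assms(1,2) by (rule sum.remove)
  also have "sum h (R - {x}) \<le> real (card (R - {x})) * (h x + 1)"
    using assms(3) by (intro sum_bounded_above) auto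
  finally have "sum h R \<le> h x + (real (card R) - 1) * (h x + 1)"
    unfolding card_remove by simp
  also have "\<dots> = (h x + 1) * card R - 1"
    by (simp add: algebra_simps)
  finally show ?thesis by linarith
qed

lemma card_mult_pred_less_sum:
  fixes h :: "'a \<Rightarrow> real"
  assumes "finite D" "x \<in> D" "\<And>g. g \<in> D \<Longrightarrow> h x \<le> h g + 1"
  shows "(h x - 1) * card D < sum h D"
proof -
  have "sum (\<lambda>g. - h g) D < (- h x + 1) * card D"
    using assms by (intro sum_less_card_mult_succ) force+
  then show ?thesis
    by (simp add: sum_negf left_diff_distrib)
qed

lemma floor_or_ceiling_if_dist_less_one:
  fixes x :: real
  assumes "\<bar>real n - x\<bar> < 1"
  shows "real n = of_int \<lfloor>x\<rfloor> \<or> real n = of_int \<lceil>x\<rceil>"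
proof (cases "real n \<le> x")
  case True
  with assms have "\<lfloor>x\<rfloor> = int n"
    by (intro floor_unique) (simp_all add: abs_less_iff)
  then show ?thesis by simp
next
  case False
  with assms have "\<lceil>x\<rceil> = int n"
    by (intro ceiling_unique) (simp_all add: abs_less_iff)
  then show ?thesis by simp
qed

locale bipartite_assignment =
  fixes W :: "'c set" and T :: "'f set" and adj :: "'c \<Rightarrow> 'f \<Rightarrow> bool"
  assumes finite_W: "finite W" and finite_T: "finite T"
begin

definition feasible :: "('c \<Rightarrow> 'f) \<Rightarrow> bool" where
  "feasible \<sigma> \<longleftrightarrow> (\<forall>w\<in>W. \<sigma> w \<in> T \<and> adj w (\<sigma> w))"

definition occupancy :: "('c \<Rightarrow> 'f) \<Rightarrow> 'f \<Rightarrow> nat" where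
  "occupancy \<sigma> f = card {w\<in>W. \<sigma> w = f}"

definition exchange_graph :: "('c \<Rightarrow> 'f) \<Rightarrow> ('f \<times> 'f) set" where
  "exchange_graph \<sigma> = {(\<sigma> w, f) | w f. w \<in> W \<and> adj w f \<and> f \<in> T}"

definition potential :: "('c \<Rightarrow> 'f) \<Rightarrow> nat" where
  "potential \<sigma> = (\<Sum>f\<in>T. (occupancy \<sigma> f)\<^sup>2)"

definition potential_minimal :: "('c \<Rightarrow> 'f) \<Rightarrow> bool" where
  "potential_minimal \<sigma> \<longleftrightarrow> feasible \<sigma> \<and> (\<forall>\<sigma>'. feasible \<sigma>' \<longrightarrow> potential \<sigma> \<le> potential \<sigma>')"

lemma feasible_fun_upd:
  "feasible \<sigma> \<Longrightarrow> h \<in> T \<Longrightarrow> adj w h \<Longrightarrow> feasible (\<sigma>(w := h))"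
  unfolding feasible_def by auto

lemma exchange_graph_subset:
  "feasible \<sigma> \<Longrightarrow> exchange_graph \<sigma> \<subseteq> T \<times> T"
  unfolding feasible_def exchange_graph_def by auto

lemma occupancy_remove:
  assumes "w \<in> W"
  shows "occupancy \<sigma> z = of_bool (\<sigma> w = z) + card {w'\<in>W - {w}. \<sigma> w' = z}"
proof -
  have "{w'\<in>W. \<sigma> w' = z} = (if \<sigma> w = z then insert w else id) {w'\<in>W - {w}. \<sigma> w' = z}"
    using assms by auto
  then show ?thesis
    unfolding occupancy_def using finite_W by (simp add: card_insert_if)
qed

lemma occupancy_fun_upd:
  assumes "w \<in> W"
  shows "occupancy (\<sigma>(w := h)) z + of_bool (z = \<sigma> w) = occupancy \<sigma> z + of_bool (z = h)"
proof -
  have "{w'\<in>W - {w}. (\<sigma>(w := h)) w' = z} = {w'\<in>W - {w}. \<sigma> w' = z}"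
    by auto
  then show ?thesis
    using occupancy_remove[OF assms, of \<sigma> z] occupancy_remove[OF assms, of "\<sigma>(w := h)" z]
    by auto
qed

lemma exchange_along_path:
  assumes "feasible \<sigma>" "(g, h) \<in> exchange_graph \<sigma> ^^ n"
  shows "\<exists>\<sigma>'. feasible \<sigma>' \<and>
    (\<forall>z. occupancy \<sigma>' z + of_bool (z = g) = occupancy \<sigma> z + of_bool (z = h))"
  using assms
proof (induction n arbitrary: \<sigma> g rule: less_induct)
  case (less n)
  show ?case
  proof (cases "g = h")
    case True
    with less.prems(1) show ?thesis by (intro exI[of _ \<sigma>]) simp
  next
    case False
    then obtain g' m where "m < n" and "(g, g') \<in> exchange_graph \<sigma>"
      and rest: "(g', h) \<in> {(a, b) \<in> exchange_graph \<sigma>. a \<noteq> g} ^^ m"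
      using relpow_first_step_avoiding_source[OF less.prems(2)] by blast
    then obtain w where w: "w \<in> W" "\<sigma> w = g" "adj w g'" "g' \<in> T"
      unfolding exchange_graph_def by blast
    let ?\<sigma>1 = "\<sigma>(w := g')"
    have sub: "(a, b) \<in> exchange_graph ?\<sigma>1"
      if "(a, b) \<in> {(a, b) \<in> exchange_graph \<sigma>. a \<noteq> g}" for a b
    proof -
      from that obtain w' where w': "w' \<in> W" "a = \<sigma> w'" "adj w' b" "b \<in> T"
        unfolding exchange_graph_def by blast
      with that w(2) have "a = ?\<sigma>1 w'"
        by (cases "w' = w") simp_all
      with w' show ?thesis
        unfolding exchange_graph_def by blast
    qed
    \<comment> \<open>The rest of the path uses no edge out of \<open>g\<close>, so it survives moving \<open>w\<close> away.\<close>
    have "(g', h) \<in> exchange_graph ?\<sigma>1 ^^ m"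
      by (rule relpowp_mono[to_set, OF sub rest])
    then obtain \<sigma>' where "feasible \<sigma>'"
      and path: "\<forall>z. occupancy \<sigma>' z + of_bool (z = g') = occupancy ?\<sigma>1 z + of_bool (z = h)"
      using less.IH[OF \<open>m < n\<close> feasible_fun_upd[OF less.prems(1) w(4,3)]] by blast
    have "occupancy \<sigma>' z + of_bool (z = g) = occupancy \<sigma> z + of_bool (z = h)" for z
      using path[rule_format, of z] occupancy_fun_upd[OF w(1), of \<sigma> g' z, unfolded w(2)]
      by linarith
    with \<open>feasible \<sigma>'\<close> show ?thesis by blast
  qed
qed

lemma potential_exchange:
  assumes "g \<in> T" "h \<in> T" "g \<noteq> h"
    and occ: "\<And>z. occupancy \<sigma>' z + of_bool (z = g) = occupancy \<sigma> z + of_bool (z = h)"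
  shows "potential \<sigma>' + 2 * occupancy \<sigma> g = potential \<sigma> + 2 * occupancy \<sigma> h + 2"
proof -
  have split: "(\<Sum>f\<in>T. q f) = q g + q h + (\<Sum>f\<in>T - {g} - {h}. q f)" for q :: "'f \<Rightarrow> nat"
  proof -
    have "(\<Sum>f\<in>T. q f) = q g + (\<Sum>f\<in>T - {g}. q f)"
      using finite_T assms(1) by (rule sum.remove)
    also have "(\<Sum>f\<in>T - {g}. q f) = q h + (\<Sum>f\<in>T - {g} - {h}. q f)"
      using finite_T assms(2,3) by (intro sum.remove) auto
    finally show ?thesis by simp
  qed
  have g: "occupancy \<sigma> g = occupancy \<sigma>' g + 1" and h: "occupancy \<sigma>' h = occupancy \<sigma> h + 1"
    using occ[of g] occ[of h] assms(3) by auto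
  have "occupancy \<sigma>' f = occupancy \<sigma> f" if "f \<in> T - {g} - {h}" for f
    using occ[of f] that by simp
  then have rest: "(\<Sum>f\<in>T - {g} - {h}. (occupancy \<sigma>' f)\<^sup>2) = (\<Sum>f\<in>T - {g} - {h}. (occupancy \<sigma> f)\<^sup>2)"
    by (intro sum.cong) simp_all
  show ?thesis
    unfolding potential_def split[of "\<lambda>f. (occupancy \<sigma>' f)\<^sup>2"] split[of "\<lambda>f. (occupancy \<sigma> f)\<^sup>2"]
      rest g h power2_sum
    by simp
qed

lemma occupancy_le_along_exchange_path:
  assumes "potential_minimal \<sigma>" "(g, h) \<in> (exchange_graph \<sigma>)\<^sup>*"
  shows "occupancy \<sigma> g \<le> occupancy \<sigma> h + 1"
proof (cases "g = h")
  case False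
  have feasible: "feasible \<sigma>" and minimal: "\<And>\<sigma>'. feasible \<sigma>' \<Longrightarrow> potential \<sigma> \<le> potential \<sigma>'"
    using assms(1) unfolding potential_minimal_def by auto
  from assms(2) False have "(g, h) \<in> (exchange_graph \<sigma>)\<^sup>+"
    by (simp add: rtrancl_eq_or_trancl)
  then have "g \<in> T" "h \<in> T"
    using trancl_subset_Sigma[OF exchange_graph_subset[OF feasible]] by auto
  obtain n where "(g, h) \<in> exchange_graph \<sigma> ^^ n"
    using assms(2) rtrancl_imp_relpow by blast
  then obtain \<sigma>' where "feasible \<sigma>'"
    and "\<forall>z. occupancy \<sigma>' z + of_bool (z = g) = occupancy \<sigma> z + of_bool (z = h)"
    using exchange_along_path[OF feasible] by blast
  with \<open>g \<in> T\<close> \<open>h \<in> T\<close> False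
  have "potential \<sigma>' + 2 * occupancy \<sigma> g = potential \<sigma> + 2 * occupancy \<sigma> h + 2"
    by (intro potential_exchange) auto
  moreover have "potential \<sigma> \<le> potential \<sigma>'"
    using minimal \<open>feasible \<sigma>'\<close> .
  ultimately show ?thesis by linarith
qed simp

lemma ex_potential_minimal:
  assumes "\<forall>w\<in>W. \<exists>f\<in>T. adj w f"
  shows "\<exists>\<sigma>. potential_minimal \<sigma>"
proof -
  have "feasible (\<lambda>w. SOME f. f \<in> T \<and> adj w f)"
    unfolding feasible_def
  proof
    fix w assume "w \<in> W"
    with assms have "\<exists>f. f \<in> T \<and> adj w f" by blast
    then show "(SOME f. f \<in> T \<and> adj w f) \<in> T \<and> adj w (SOME f. f \<in> T \<and> adj w f)"
      by (rule someI_ex)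
  qed
  then show ?thesis
    unfolding potential_minimal_def using ex_has_least_nat[of feasible] by blast
qed

lemma sum_occupancy:
  assumes "finite S"
  shows "(\<Sum>f\<in>S. occupancy \<sigma> f) = card {w\<in>W. \<sigma> w \<in> S}"
proof -
  have "{w\<in>W. \<sigma> w \<in> S} = (\<Union>f\<in>S. {w\<in>W. \<sigma> w = f})" by auto
  also have "card \<dots> = (\<Sum>f\<in>S. card {w\<in>W. \<sigma> w = f})"
    using assms finite_W by (intro card_UN_disjoint) auto
  finally show ?thesis by (simp add: occupancy_def)
qed

lemma sum_occupancy_eq_card:
  assumes "feasible \<sigma>"
  shows "(\<Sum>f\<in>T. occupancy \<sigma> f) = card W"
proof -
  have "{w\<in>W. \<sigma> w \<in> T} = W"
    using assms unfolding feasible_def by auto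
  then show ?thesis by (simp add: sum_occupancy[OF finite_T])
qed

lemma card_neighbours_le_sum_occupancy:
  assumes "feasible \<sigma>" "X \<subseteq> T"
    and closed: "\<And>a b. (a, b) \<in> exchange_graph \<sigma> \<Longrightarrow> b \<in> X \<Longrightarrow> a \<in> X"
  shows "card {w\<in>W. \<exists>f\<in>X. adj w f} \<le> (\<Sum>f\<in>X. occupancy \<sigma> f)"
proof -
  have "{w\<in>W. \<exists>f\<in>X. adj w f} \<subseteq> {w\<in>W. \<sigma> w \<in> X}"
  proof safe
    fix w f assume "w \<in> W" "f \<in> X" "adj w f"
    then have "(\<sigma> w, f) \<in> exchange_graph \<sigma>"
      using assms(2) unfolding exchange_graph_def by blast
    with closed \<open>f \<in> X\<close> show "\<sigma> w \<in> X" by blast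
  qed
  then show ?thesis
    using finite_W finite_subset[OF assms(2) finite_T]
    by (simp add: sum_occupancy card_mono)
qed

end

locale proportional_hall = bipartite_assignment +
  assumes T_nonempty: "T \<noteq> {}"
    and covered: "\<forall>w\<in>W. \<exists>f\<in>T. adj w f"
    and hall: "\<And>S. S \<subseteq> T \<Longrightarrow> card W * card S \<le> card {w\<in>W. \<exists>f\<in>S. adj w f} * card T"
begin

lemma card_T_pos: "0 < card T"
  using finite_T T_nonempty by (simp add: card_gt_0_iff)

lemma proportional_le_sum_occupancy:
  assumes "feasible \<sigma>" "X \<subseteq> T"
    and "\<And>a b. (a, b) \<in> exchange_graph \<sigma> \<Longrightarrow> b \<in> X \<Longrightarrow> a \<in> X"
  shows "card W / card T * card X \<le> (\<Sum>f\<in>X. real (occupancy \<sigma> f))"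
proof -
  have "card W * card X \<le> (\<Sum>f\<in>X. occupancy \<sigma> f) * card T"
    using hall[OF assms(2)] card_neighbours_le_sum_occupancy[OF assms]
    by (meson le_trans mult_le_mono1)
  then have "real (card W) * card X \<le> (\<Sum>f\<in>X. real (occupancy \<sigma> f)) * card T"
    by (metis of_nat_le_iff of_nat_mult of_nat_sum)
  with card_T_pos show ?thesis
    by (simp add: field_simps)
qed

lemma sum_occupancy_le_proportional:
  assumes "feasible \<sigma>" "D \<subseteq> T"
    and closed: "\<And>a b. (a, b) \<in> exchange_graph \<sigma> \<Longrightarrow> a \<in> D \<Longrightarrow> b \<in> D"
  shows "(\<Sum>f\<in>D. real (occupancy \<sigma> f)) \<le> card W / card T * card D"
proof -
  have "a \<in> T - D" if "(a, b) \<in> exchange_graph \<sigma>" "b \<in> T - D" for a b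
    using that closed exchange_graph_subset[OF assms(1)] by blast
  with assms(1) have "card W / card T * card (T - D) \<le> (\<Sum>f\<in>T - D. real (occupancy \<sigma> f))"
    by (intro proportional_le_sum_occupancy) auto
  moreover have "(\<Sum>f\<in>T - D. real (occupancy \<sigma> f)) + (\<Sum>f\<in>D. real (occupancy \<sigma> f)) = card W"
    using sum_occupancy_eq_card[OF assms(1)] sum.subset_diff[OF assms(2) finite_T]
    by (metis of_nat_add of_nat_sum)
  moreover have "real (card T) = card D + card (T - D)"
    using assms(2) finite_T finite_subset[OF assms(2) finite_T]
    by (simp add: card_Diff_subset card_mono)
  then have "card W / card T * card D + card W / card T * card (T - D) = card W / card T * card T"
    by (simp only: of_nat_add distrib_left)
  ultimately show ?thesis
    using card_T_pos by simp
qed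

lemma proportional_less_occupancy_succ:
  assumes "potential_minimal \<sigma>" "f \<in> T"
  shows "card W / card T < real (occupancy \<sigma> f) + 1"
proof -
  have feasible: "feasible \<sigma>"
    using assms(1) unfolding potential_minimal_def by simp
  define R where "R = {g \<in> T. (g, f) \<in> (exchange_graph \<sigma>)\<^sup>*}"
  have "f \<in> R" "R \<subseteq> T"
    using assms(2) unfolding R_def by auto
  then have "finite R"
    using finite_T finite_subset by blast
  have "a \<in> R" if "(a, b) \<in> exchange_graph \<sigma>" "b \<in> R" for a b
    using that exchange_graph_subset[OF feasible] unfolding R_def
    by (auto intro: converse_rtrancl_into_rtrancl)
  with feasible \<open>R \<subseteq> T\<close> have "card W / card T * card R \<le> (\<Sum>g\<in>R. real (occupancy \<sigma> g))"
    by (rule proportional_le_sum_occupancy)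
  also have "\<dots> < (real (occupancy \<sigma> f) + 1) * card R"
  proof (rule sum_less_card_mult_succ[OF \<open>finite R\<close> \<open>f \<in> R\<close>])
    fix g assume "g \<in> R"
    then have "occupancy \<sigma> g \<le> occupancy \<sigma> f + 1"
      unfolding R_def by (blast intro: occupancy_le_along_exchange_path[OF assms(1)])
    then show "real (occupancy \<sigma> g) \<le> real (occupancy \<sigma> f) + 1" by simp
  qed
  finally show ?thesis
    by (rule mult_right_less_imp_less) simp
qed

lemma occupancy_pred_less_proportional:
  assumes "potential_minimal \<sigma>" "f \<in> T"
  shows "real (occupancy \<sigma> f) - 1 < card W / card T"
proof -
  have feasible: "feasible \<sigma>"
    using assms(1) unfolding potential_minimal_def by simp
  define D where "D = {g \<in> T. (f, g) \<in> (exchange_graph \<sigma>)\<^sup>*}"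
  have "f \<in> D" "D \<subseteq> T"
    using assms(2) unfolding D_def by auto
  then have "finite D"
    using finite_T finite_subset by blast
  have "(real (occupancy \<sigma> f) - 1) * card D < (\<Sum>g\<in>D. real (occupancy \<sigma> g))"
  proof (rule card_mult_pred_less_sum[OF \<open>finite D\<close> \<open>f \<in> D\<close>])
    fix g assume "g \<in> D"
    then have "occupancy \<sigma> f \<le> occupancy \<sigma> g + 1"
      unfolding D_def by (blast intro: occupancy_le_along_exchange_path[OF assms(1)])
    then show "real (occupancy \<sigma> f) \<le> real (occupancy \<sigma> g) + 1" by simp
  qed
  also have "\<dots> \<le> card W / card T * card D"
    using feasible \<open>D \<subseteq> T\<close> exchange_graph_subset[OF feasible]
    by (intro sum_occupancy_le_proportional) (auto simp: D_def intro: rtrancl_into_rtrancl)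
  finally show ?thesis
    by (rule mult_right_less_imp_less) simp
qed

theorem ex_assignment_within_one_of_proportional:
  "\<exists>\<sigma>. feasible \<sigma> \<and> (\<forall>f\<in>T. \<bar>real (occupancy \<sigma> f) - card W / card T\<bar> < 1)"
proof -
  obtain \<sigma> where "potential_minimal \<sigma>"
    using ex_potential_minimal[OF covered] by blast
  then show ?thesis
    using proportional_less_occupancy_succ occupancy_pred_less_proportional
    unfolding potential_minimal_def by (fastforce simp: abs_less_iff)
qed

end

lemma remaining_Suc:
  "remaining V E F s (Suc i) =
    (fst (remaining V E F s i) - classF V E F s i, snd (remaining V E F s i) - classV V E F s i)"
  by (simp add: classF_def classV_def Let_def split_beta)

declare remaining.simps(2) [simp del]

lemma remaining_eq:
  "remaining V E F s i = (F - (\<Union>j<i. classF V E F s j), V - (\<Union>j<i. classV V E F s j))"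
  by (induction i) (auto simp: remaining_Suc lessThan_Suc)

lemma classF_eq:
  "classF V E F s i =
    (if fst (remaining V E F s i) = {} then {}
     else MNS V E F s (fst (remaining V E F s i)) (snd (remaining V E F s i)))"
  by (simp add: classF_def split_beta)

lemma MNS_in_minimizers:
  assumes "finite Fs" "Fs \<noteq> {}"
  shows "MNS V E F s Fs Vs \<in> minimizers V E F s Fs Vs"
proof -
  let ?M = "minimizers V E F s Fs Vs"
  have "finite {T. T \<noteq> {} \<and> T \<subseteq> Fs}" "{T. T \<noteq> {} \<and> T \<subseteq> Fs} \<noteq> {}"
    using assms by auto
  then obtain T0 where "is_arg_min (ratio V E F s Vs) (\<lambda>T. T \<in> {T. T \<noteq> {} \<and> T \<subseteq> Fs}) T0"
    using ex_is_arg_min_if_finite by blast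
  then have "T0 \<in> ?M"
    unfolding minimizers_def is_arg_min_linorder by auto
  moreover have "card T \<le> card Fs" if "T \<in> ?M" for T
    using that assms(1) unfolding minimizers_def by (auto intro: card_mono)
  ultimately have "\<exists>T. T \<in> ?M \<and> (\<forall>T'\<in>?M. card T' \<le> card T)"
    using Lattices_Big.ex_has_greatest_nat[of "\<lambda>T. T \<in> ?M" T0 card "Suc (card Fs)"]
    by (metis le_imp_less_Suc)
  from someI_ex[OF this] show ?thesis
    unfolding MNS_def by blast
qed

lemma classV_subset: "classV V E F s i \<subseteq> V"
  unfolding classV_def Acl_def by auto

lemma classV_disjoint:
  assumes "i \<noteq> j"
  shows "classV V E F s i \<inter> classV V E F s j = {}"
proof -
  have "classV V E F s i \<inter> classV V E F s j = {}" if "i < j" for i j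
    using that unfolding classV_def[of V E F s j] by (auto simp: remaining_eq)
  with assms show ?thesis
    by (metis inf_commute linorder_neqE_nat)
qed

context
  fixes V :: "'v set" and E :: "('v \<times> 'v) set" and F :: "'f set" and s :: "'f \<Rightarrow> 'v"
  assumes finite_F: "finite F"
begin

lemma classF_in_minimizers:
  assumes "fst (remaining V E F s i) \<noteq> {}"
  shows "classF V E F s i \<in> minimizers V E F s (fst (remaining V E F s i)) (snd (remaining V E F s i))"
proof -
  have "finite (fst (remaining V E F s i))"
    using finite_F by (simp add: remaining_eq)
  with assms show ?thesis
    unfolding classF_eq by (simp add: MNS_in_minimizers)
qed

lemma classF_subset_remaining: "classF V E F s i \<subseteq> fst (remaining V E F s i)"
  using classF_in_minimizers unfolding minimizers_def
  by (cases "fst (remaining V E F s i) = {}") (auto simp: classF_eq)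

lemma classF_nonempty:
  "fst (remaining V E F s i) \<noteq> {} \<Longrightarrow> classF V E F s i \<noteq> {}"
  using classF_in_minimizers unfolding minimizers_def by blast

lemma classF_subset: "classF V E F s i \<subseteq> F"
  using classF_subset_remaining[of i] by (auto simp: remaining_eq)

lemma classF_disjoint:
  assumes "i \<noteq> j"
  shows "classF V E F s i \<inter> classF V E F s j = {}"
proof -
  have "classF V E F s i \<inter> classF V E F s j = {}" if "i < j" for i j
    using classF_subset_remaining[of j] that by (auto simp: remaining_eq)
  with assms show ?thesis
    by (metis inf_commute linorder_neqE_nat)
qed

lemma card_remaining_le: "card (fst (remaining V E F s i)) \<le> card F - i"
proof (induction i)
  case (Suc i)
  let ?Fr = "fst (remaining V E F s i)"
  show ?case
  proof (cases "?Fr = {}")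
    case True
    then show ?thesis by (simp add: remaining_Suc)
  next
    case False
    have "finite ?Fr"
      using finite_F by (simp add: remaining_eq)
    then have "finite (classF V E F s i)"
      using classF_subset_remaining[of i] finite_subset by blast
    with classF_nonempty[OF False] have "0 < card (classF V E F s i)"
      by (simp add: card_gt_0_iff)
    with Suc.IH show ?thesis
      using classF_subset_remaining[of i] \<open>finite (classF V E F s i)\<close>
      by (simp add: remaining_Suc card_Diff_subset)
  qed
qed (simp add: remaining_eq)

lemma ex_classF_mem:
  assumes "f \<in> F"
  shows "\<exists>i. f \<in> classF V E F s i"
proof -
  have "fst (remaining V E F s (card F)) = {}"
    using card_remaining_le[of "card F"] finite_F by (simp add: remaining_eq)
  with assms show ?thesis
    by (auto simp: remaining_eq)
qed

lemma client_in_class: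
  assumes "v \<in> V" "Nfac E F s v \<noteq> {}"
  shows "\<exists>i. v \<in> classV V E F s i"
proof -
  obtain f where f: "f \<in> Nfac E F s v"
    using assms(2) by blast
  then have "f \<in> F"
    unfolding Nfac_def by simp
  then obtain i where "f \<in> classF V E F s i"
    using ex_classF_mem by blast
  with assms(1) f have "v \<in> Acl V E F s (classF V E F s i)"
    unfolding Acl_def by blast
  then show ?thesis
  proof (cases "v \<in> (\<Union>j<i. classV V E F s j)")
    case False
    with \<open>v \<in> Acl V E F s (classF V E F s i)\<close> assms(1) have "v \<in> classV V E F s i"
      unfolding classV_def[of V E F s i] remaining_eq[of V E F s i] by simp
    then show ?thesis ..
  qed blast
qed

lemma class_hall:
  assumes "S \<subseteq> classF V E F s i"
  shows "card (classV V E F s i) * card S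
    \<le> card {v \<in> classV V E F s i. \<exists>f\<in>S. f \<in> Nfac E F s v} * card (classF V E F s i)"
proof (cases "S = {}")
  case False
  let ?Fr = "fst (remaining V E F s i)" and ?Vr = "snd (remaining V E F s i)"
  have "classF V E F s i \<noteq> {}" "finite S"
    using False assms finite_subset[OF _ finite_F] classF_subset by blast+
  then have "?Fr \<noteq> {}"
    by (auto simp: classF_eq)
  have "finite (classF V E F s i)"
    using finite_subset[OF classF_subset finite_F] .
  then have "ratio V E F s ?Vr (classF V E F s i) \<le> ratio V E F s ?Vr S"
    using classF_in_minimizers classF_subset_remaining assms False
    unfolding minimizers_def by blast
  moreover have "Acl V E F s S \<inter> ?Vr = {v \<in> classV V E F s i. \<exists>f\<in>S. f \<in> Nfac E F s v}"
    using assms unfolding classV_def Acl_def by auto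
  ultimately have "real (card (classV V E F s i)) / card (classF V E F s i)
      \<le> card {v \<in> classV V E F s i. \<exists>f\<in>S. f \<in> Nfac E F s v} / card S"
    unfolding ratio_def classV_def by simp
  with \<open>classF V E F s i \<noteq> {}\<close> \<open>finite (classF V E F s i)\<close> \<open>finite S\<close> False
  have "real (card (classV V E F s i)) * card S
      \<le> card {v \<in> classV V E F s i. \<exists>f\<in>S. f \<in> Nfac E F s v} * card (classF V E F s i)"
    by (simp add: divide_le_eq le_divide_eq field_simps card_gt_0_iff)
  then show ?thesis
    by (simp flip: of_nat_mult)
qed simp

lemma ex_balanced_class_assignment:
  assumes "finite V"
  shows "\<exists>\<tau>. (\<forall>v\<in>classV V E F s i. \<tau> v \<in> classF V E F s i \<and> \<tau> v \<in> Nfac E F s v) \<and>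
    (\<forall>f\<in>classF V E F s i.
      \<bar>real (card {v \<in> classV V E F s i. \<tau> v = f}) - class_load V E F s i\<bar> < 1)"
proof (cases "classF V E F s i = {}")
  case True
  then show ?thesis
    unfolding classV_def[of V E F s i] Acl_def by simp
next
  case False
  interpret proportional_hall "classV V E F s i" "classF V E F s i" "\<lambda>v f. f \<in> Nfac E F s v"
  proof unfold_locales
    show "finite (classV V E F s i)"
      using finite_subset[OF classV_subset assms] .
    show "finite (classF V E F s i)"
      using finite_subset[OF classF_subset finite_F] .
    show "\<forall>v\<in>classV V E F s i. \<exists>f\<in>classF V E F s i. f \<in> Nfac E F s v"
      unfolding classV_def[of V E F s i] Acl_def by blast
  qed (use False class_hall in auto)
  from ex_assignment_within_one_of_proportional show ?thesis
    unfolding feasible_def occupancy_def class_load_def by blast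
qed

definition class_profile :: "(nat \<Rightarrow> 'v \<Rightarrow> 'f) \<Rightarrow> 'v \<Rightarrow> 'f \<Rightarrow> real" where
  "class_profile \<tau> v f = of_bool (\<exists>i. v \<in> classV V E F s i \<and> \<tau> i v = f)"

lemma class_profile_eq:
  assumes "v \<in> classV V E F s i"
  shows "class_profile \<tau> v f = of_bool (\<tau> i v = f)"
proof -
  have "j = i" if "v \<in> classV V E F s j" for j
    using that assms classV_disjoint[of j i V E F s] by blast
  with assms have "(\<exists>j. v \<in> classV V E F s j \<and> \<tau> j v = f) \<longleftrightarrow> \<tau> i v = f"
    by metis
  then show ?thesis
    unfolding class_profile_def by (simp only:)
qed

lemma client_profile_class_profile:
  assumes assigned: "\<And>i v. v \<in> classV V E F s i \<Longrightarrow> \<tau> i v \<in> classF V E F s i \<and> \<tau> i v \<in> Nfac E F s v"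
  shows "client_profile V E F s (class_profile \<tau>)"
  unfolding client_profile_def
proof (intro conjI ballI impI)
  fix v f
  show "0 \<le> class_profile \<tau> v f" "class_profile \<tau> v f \<le> 1"
    unfolding class_profile_def by simp_all
  assume "f \<notin> Nfac E F s v"
  with assigned have "\<not> (\<exists>i. v \<in> classV V E F s i \<and> \<tau> i v = f)"
    by blast
  then show "class_profile \<tau> v f = 0"
    unfolding class_profile_def by simp
next
  fix v assume "v \<in> V" "Nfac E F s v \<noteq> {}"
  then obtain i where i: "v \<in> classV V E F s i"
    using client_in_class by blast
  with assigned classF_subset have "\<tau> i v \<in> F"
    by blast
  with finite_F show "(\<Sum>f\<in>F. class_profile \<tau> v f) = 1"
    by (simp add: class_profile_eq[OF i])
qed

lemma load_class_profile:
  assumes "finite V" and assigned: "\<And>i v. v \<in> classV V E F s i \<Longrightarrow> \<tau> i v \<in> classF V E F s i \<and> \<tau> i v \<in> Nfac E F s v" and f: "f \<in> classF V E F s i"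
  shows "load V (class_profile \<tau>) f = card {v \<in> classV V E F s i. \<tau> i v = f}"
proof -
  have "j = i" if "v \<in> classV V E F s j" "\<tau> j v = f" for v j
    using that assigned[of v j] f classF_disjoint[of j i] by blast
  with classV_subset[of V E F s i]
  have "V \<inter> {v. \<exists>j. v \<in> classV V E F s j \<and> \<tau> j v = f} = {v \<in> classV V E F s i. \<tau> i v = f}"
    by auto
  with assms(1) show ?thesis
    unfolding load_def class_profile_def by simp
qed

lemma rounded_class_profile:
  assumes "finite V" and assigned: "\<And>i v. v \<in> classV V E F s i \<Longrightarrow> \<tau> i v \<in> classF V E F s i \<and> \<tau> i v \<in> Nfac E F s v"
    and balanced: "\<And>i f. f \<in> classF V E F s i \<Longrightarrow>
      \<bar>real (card {v \<in> classV V E F s i. \<tau> i v = f}) - class_load V E F s i\<bar> < 1"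
  shows "rounded V E F s (class_profile \<tau>)"
proof -
  have "\<exists>!g. g \<in> classF V E F s i \<and> class_profile \<tau> v g = 1" if "v \<in> classV V E F s i" for i v
    using assigned[OF that] unfolding class_profile_eq[OF that] by auto
  then show ?thesis
    unfolding rounded_def
    using client_profile_class_profile[OF assigned] load_class_profile[OF assms(1) assigned]
      balanced floor_or_ceiling_if_dist_less_one
    by simp
qed

end

theorem mainTheorem10:
  fixes V :: "'v set" and E :: "('v \<times> 'v) set" and F :: "'f set" and s :: "'f \<Rightarrow> 'v"
  assumes "finite V" and "E \<subseteq> V \<times> V" and "finite F" and "\<forall>f \<in> F. s f \<in> V"
  shows "\<exists>\<sigma>. rounded V E F s \<sigma>"
proof -
  have "\<forall>i. \<exists>\<tau>. (\<forall>v\<in>classV V E F s i. \<tau> v \<in> classF V E F s i \<and> \<tau> v \<in> Nfac E F s v) \<and>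
      (\<forall>f\<in>classF V E F s i.
        \<bar>real (card {v \<in> classV V E F s i. \<tau> v = f}) - class_load V E F s i\<bar> < 1)"
    using ex_balanced_class_assignment[OF assms(3,1)] by blast
  from choice[OF this] obtain \<tau> where
    "\<And>i v. v \<in> classV V E F s i \<Longrightarrow> \<tau> i v \<in> classF V E F s i \<and> \<tau> i v \<in> Nfac E F s v"
    "\<And>i f. f \<in> classF V E F s i \<Longrightarrow>
      \<bar>real (card {v \<in> classV V E F s i. \<tau> i v = f}) - class_load V E F s i\<bar> < 1"
    by blast
  from rounded_class_profile[OF assms(3,1) this] show ?thesis
    by blast
qed

end
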